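(* Let $n\ge 3$, let ${\bf a}=(1)$, and let ${\bf b}=(\beta_1,\ldots,\beta_q)$, ${\bf c}=(\gamma_1,\ldots,\gamma_r)$ be sequences of positive integers with sums at most $n$, such that $2\le q\le r$. If $\mathcal T_{{\bf a},{\bf b},{\bf c}}$ has finitely many $G$-orbits, then ${\bf b}$ or ${\bf c}$ equals $(k,n-k)$ for some integer $k$.
   Context: $\mathbb F$ is an infinite field of characteristic $\ne 2$. Equip $\mathbb F^{2n}$ (canonical basis $e_1,\ldots,e_{2n}$) with the symmetric bilinear form $(e_i,e_j)=\delta_{i,2n+1-j}$, and let $G={\rm O}_{2n}(\mathbb F)$ be its isometry group. A subspace $V$ is isotropic if $(V,V)=\{0\}$. For a sequence ${\bf a}=(\alpha_1,\ldots,\alpha_p)$ of positive integers with $\sum\alpha_j\le n$, $M_{\bf a}$ is the set of flags $V_1\subset\cdots\subset V_p$ in $\mathbb F^{2n}$ with $\dim V_j=\alpha_1+\cdots+\alpha_j$ and $V_p$ isotropic. $\mathcal T_{{\bf a},{\bf b},{\bf c}}=M_{\bf a}\times M_{\bf b}\times M_{\bf c}$ with the diagonal $G$-action. *)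

theory Defs
  imports Complex_Main "HOL-Library.Function_Algebras"
begin

text \<open>Vectors of F^(2n) are represented as functions nat => F vanishing from index 2n on;
  coordinate i (0-based) corresponds to the basis vector e_(i+1).\<close>

definition fscale :: "'a::field \<Rightarrow> (nat \<Rightarrow> 'a) \<Rightarrow> (nat \<Rightarrow> 'a)" where
  "fscale c v = (\<lambda>i. c * v i)"

global_interpretation fvs: vector_space "fscale :: 'a::field \<Rightarrow> (nat \<Rightarrow> 'a) \<Rightarrow> (nat \<Rightarrow> 'a)"
  by unfold_locales (auto simp: fscale_def algebra_simps)

definition amb :: "nat \<Rightarrow> (nat \<Rightarrow> 'a::field) set" where
  "amb n = {v. \<forall>i\<ge>2*n. v i = 0}"

text \<open>The symmetric bilinear form (e_i, e_j) = delta_(i, 2n+1-j).\<close>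
definition bform :: "nat \<Rightarrow> (nat \<Rightarrow> 'a::field) \<Rightarrow> (nat \<Rightarrow> 'a) \<Rightarrow> 'a" where
  "bform n u v = (\<Sum>i<2*n. u i * v (2*n - 1 - i))"

definition isotropic :: "nat \<Rightarrow> (nat \<Rightarrow> 'a::field) set \<Rightarrow> bool" where
  "isotropic n W \<longleftrightarrow> (\<forall>u\<in>W. \<forall>v\<in>W. bform n u v = 0)"

text \<open>The orthogonal group O_(2n)(F): linear bijections of F^(2n) preserving the form
  (represented by functions whose behaviour outside F^(2n) is irrelevant).\<close>
definition orth_group :: "nat \<Rightarrow> ((nat \<Rightarrow> 'a::field) \<Rightarrow> (nat \<Rightarrow> 'a)) set" where
  "orth_group n = {g.
     (\<forall>u\<in>amb n. \<forall>v\<in>amb n. g (u + v) = g u + g v) \<and>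
     (\<forall>c. \<forall>u\<in>amb n. g (fscale c u) = fscale c (g u)) \<and>
     bij_betw g (amb n) (amb n) \<and>
     (\<forall>u\<in>amb n. \<forall>v\<in>amb n. bform n (g u) (g v) = bform n u v)}"

definition flags :: "nat \<Rightarrow> nat list \<Rightarrow> (nat \<Rightarrow> 'a::field) set list set" where
  "flags n a = {Vs. length Vs = length a \<and>
     (\<forall>j<length a. fvs.subspace (Vs ! j) \<and> Vs ! j \<subseteq> amb n \<and>
                   fvs.dim (Vs ! j) = sum_list (take (Suc j) a)) \<and>
     (\<forall>j. Suc j < length a \<longrightarrow> Vs ! j \<subseteq> Vs ! Suc j) \<and>
     (Vs \<noteq> [] \<longrightarrow> isotropic n (last Vs))}"

definition act_flag :: "((nat \<Rightarrow> 'a) \<Rightarrow> (nat \<Rightarrow> 'a)) \<Rightarrow> (nat \<Rightarrow> 'a) set list \<Rightarrow> (nat \<Rightarrow> 'a) set list" where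
  "act_flag g Vs = map (\<lambda>V. g ` V) Vs"

definition triple_orbits :: "nat \<Rightarrow> nat list \<Rightarrow> nat list \<Rightarrow> nat list
    \<Rightarrow> ((nat \<Rightarrow> 'a::field) set list \<times> (nat \<Rightarrow> 'a) set list \<times> (nat \<Rightarrow> 'a) set list) set set" where
  "triple_orbits n a b c =
     {{(act_flag g x, act_flag g y, act_flag g z) | g. g \<in> orth_group n} | x y z.
        x \<in> flags n a \<and> y \<in> flags n b \<and> z \<in> flags n c}"

end

theory Submission
  imports Defs
begin

(* Coordinates are indexed from 0, and a = beta_1. Take for Y the flag of initial coordinate
   subspaces span(e_0, ..., e_(k-1)) and for Z an isotropic coordinate flag with e_(2n-1) in Z_1
   and e_(2n-1-a) in Z_2, the partners of e_0 in Y_1 and e_a in Y_2. If neither b nor c is of the form (k, n - k), then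
   beta_1 + beta_2 < n and gamma_1 + gamma_2 < n, which leaves room to fill up Z_1 and Z_2 away
   from the coordinates n - 1 and n. The isotropic vectors
     l_t = t e_0 + e_(2n-1) + e_a + e_(2n-1-a) + e_(n-1) - (1 + t) e_n
   satisfy (l_t, e_0) (l_t, e_(2n-1)) = t and (l_t, e_a) (l_t, e_(2n-1-a)) = 1.
   If g in G fixes Y and Z and maps l_s to c l_t, the images u, v, w, z of e_0, e_a, e_(2n-1),
   e_(2n-1-a) lie in Y_1, Y_2, Z_1, Z_2; their supports force (l_t, u) (l_t, w) = t and
   (l_t, v) (l_t, z) = 1, and comparing with the pairings of l_s gives c^2 = 1 and s = c^2 t.
   So the lines through the l_t lie in pairwise distinct orbits, and there are infinitely many
   of them since F is infinite. *)

definition basis_vec :: "nat \<Rightarrow> nat \<Rightarrow> 'a::field" where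
  "basis_vec k = (\<lambda>i. if i = k then 1 else 0)"

definition coord_span :: "nat set \<Rightarrow> (nat \<Rightarrow> 'a::field) set" where
  "coord_span S = fvs.span (basis_vec ` S)"

lemma basis_vec_in_coord_span: "k \<in> S \<Longrightarrow> basis_vec k \<in> coord_span S"
  unfolding coord_span_def by (simp add: fvs.span_base)

lemma coord_span_vanishes:
  assumes "x \<in> (coord_span S :: (nat \<Rightarrow> 'a::field) set)" "i \<notin> S"
  shows "x i = 0"
proof -
  have "fvs.subspace {x :: nat \<Rightarrow> 'a. \<forall>i\<in>-S. x i = 0}"
    unfolding fvs.subspace_def by (auto simp: fscale_def)
  then have "coord_span S \<subseteq> {x :: nat \<Rightarrow> 'a. \<forall>i\<in>-S. x i = 0}"
    unfolding coord_span_def by (rule fvs.span_minimal[rotated]) (auto simp: basis_vec_def)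
  then show ?thesis using assms by auto
qed

lemma inj_basis_vec: "inj (basis_vec :: nat \<Rightarrow> nat \<Rightarrow> 'a::field)"
  by (rule injI) (metis basis_vec_def one_neq_zero)

lemma independent_basis_vecs: "fvs.independent (basis_vec ` S :: (nat \<Rightarrow> 'a::field) set)"
proof
  assume "fvs.dependent (basis_vec ` S :: (nat \<Rightarrow> 'a) set)"
  then obtain k where "k \<in> S"
    and k: "(basis_vec k :: nat \<Rightarrow> 'a) \<in> fvs.span (basis_vec ` S - {basis_vec k})"
    unfolding fvs.dependent_def by auto
  have "basis_vec ` S - {basis_vec k} \<subseteq> (basis_vec ` (S - {k}) :: (nat \<Rightarrow> 'a) set)"
    by auto
  with k have "(basis_vec k :: nat \<Rightarrow> 'a) \<in> coord_span (S - {k})"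
    unfolding coord_span_def using fvs.span_mono by blast
  then have "(basis_vec k :: nat \<Rightarrow> 'a) k = 0"
    by (rule coord_span_vanishes) simp
  then show False by (simp add: basis_vec_def)
qed

lemma dim_coord_span: "fvs.dim (coord_span S :: (nat \<Rightarrow> 'a::field) set) = card S"
  unfolding coord_span_def
  using fvs.dim_span_eq_card_independent[OF independent_basis_vecs]
    card_image[OF inj_on_subset[OF inj_basis_vec]]
  by (metis subset_UNIV)

lemma coord_span_mono: "S \<subseteq> T \<Longrightarrow> coord_span S \<subseteq> coord_span T"
  unfolding coord_span_def by (simp add: fvs.span_mono image_mono)

lemma subspace_amb: "fvs.subspace (amb n :: (nat \<Rightarrow> 'a::field) set)"
  unfolding fvs.subspace_def amb_def by (auto simp: fscale_def)

lemma basis_vec_in_amb: "k < 2*n \<Longrightarrow> basis_vec k \<in> amb n"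
  by (auto simp: amb_def basis_vec_def)

lemma coord_span_subset_amb: "S \<subseteq> {..<2*n} \<Longrightarrow> coord_span S \<subseteq> amb n"
  unfolding coord_span_def
  by (rule fvs.span_minimal) (auto intro: basis_vec_in_amb subspace_amb)

lemma bform_sym: "bform n u v = bform n v u"
  unfolding bform_def
  by (rule sum.reindex_bij_witness[where i="\<lambda>i. 2*n-1-i" and j="\<lambda>i. 2*n-1-i"]) auto

lemma bform_add_right: "bform n u (v + w) = bform n u v + bform n u w"
  unfolding bform_def by (simp add: distrib_left sum.distrib)

lemma bform_fscale_right: "bform n u (fscale c v) = c * bform n u v"
  unfolding bform_def fscale_def by (simp add: sum_distrib_left algebra_simps)

lemma bform_fscale_left: "bform n (fscale c u) v = c * bform n u v"
  by (metis bform_sym bform_fscale_right)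

lemma bform_basis_vec_left: "k < 2*n \<Longrightarrow> bform n (basis_vec k) u = u (2*n-1-k)"
  unfolding bform_def basis_vec_def
  by (simp add: if_distrib[where f="\<lambda>x. x * _"] cong: if_cong)

lemma bform_basis_vec_right: "k < 2*n \<Longrightarrow> bform n u (basis_vec k) = u (2*n-1-k)"
  by (metis bform_sym bform_basis_vec_left)

lemma bform_coord_span:
  assumes "u \<in> coord_span S" "v \<in> coord_span T"
  shows "bform n u v = (\<Sum>i | i \<in> S \<and> i < 2*n \<and> 2*n-1-i \<in> T. u i * v (2*n-1-i))"
  unfolding bform_def
  by (rule sum.mono_neutral_right)
    (use coord_span_vanishes[OF assms(1)] coord_span_vanishes[OF assms(2)] in auto)

lemma isotropic_coord_span:
  assumes "\<And>i. i \<in> S \<Longrightarrow> 2*n-1-i \<notin> S"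
  shows "isotropic n (coord_span S)"
proof -
  have "bform n u v = 0" if "u \<in> coord_span S" "v \<in> coord_span S" for u v
  proof -
    have "{i. i \<in> S \<and> i < 2*n \<and> 2*n-1-i \<in> S} = {}"
      using assms by auto
    then show ?thesis
      by (simp only: bform_coord_span[OF that]) simp
  qed
  then show ?thesis
    unfolding isotropic_def by blast
qed

definition coord_flag :: "(nat \<Rightarrow> nat set) \<Rightarrow> nat \<Rightarrow> (nat \<Rightarrow> 'a::field) set list" where
  "coord_flag S len = map (\<lambda>j. coord_span (S j)) [0..<len]"

lemma length_coord_flag [simp]: "length (coord_flag S len) = len"
  unfolding coord_flag_def by simp

lemma coord_flag_nth: "j < len \<Longrightarrow> coord_flag S len ! j = coord_span (S j)"
  unfolding coord_flag_def by simp

lemma coord_flag_in_flags: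
  assumes "\<And>j. j < length a \<Longrightarrow> S j \<subseteq> {..<2*n}"
    and "\<And>j. j < length a \<Longrightarrow> card (S j) = sum_list (take (Suc j) a)"
    and "\<And>j. Suc j < length a \<Longrightarrow> S j \<subseteq> S (Suc j)"
    and "\<And>i. a \<noteq> [] \<Longrightarrow> i \<in> S (length a - 1) \<Longrightarrow> 2*n-1-i \<notin> S (length a - 1)"
  shows "coord_flag S (length a) \<in> flags n a"
  unfolding flags_def
proof (intro CollectI conjI allI impI)
  fix j assume "j < length a"
  then show "fvs.subspace (coord_flag S (length a) ! j)"
    and "coord_flag S (length a) ! j \<subseteq> amb n"
    and "fvs.dim (coord_flag S (length a) ! j) = sum_list (take (Suc j) a)"
    using assms(1,2) by (simp_all add: coord_flag_nth coord_span_subset_amb dim_coord_span,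
        simp add: coord_span_def)
next
  fix j assume "Suc j < length a"
  then show "coord_flag S (length a) ! j \<subseteq> coord_flag S (length a) ! Suc j"
    using assms(3) by (simp add: coord_flag_nth coord_span_mono)
next
  assume "coord_flag S (length a) \<noteq> []"
  then have "a \<noteq> []" "last (coord_flag S (length a)) = coord_span (S (length a - 1))"
    by (auto simp: coord_flag_def last_map)
  then show "isotropic n (last (coord_flag S (length a)))"
    using assms(4) isotropic_coord_span by metis
qed (simp add: coord_flag_def)

lemma sum_list_take_mono:
  assumes "j \<le> k"
  shows "sum_list (take j xs) \<le> sum_list (take k (xs :: nat list))"
proof -
  have "take k xs = take j xs @ take (k - j) (drop j xs)"
    using take_add[of j "k - j" xs] assms by simp
  then show ?thesis by (metis le_add1 sum_list_append)
qed

lemma sum_list_take_le: "sum_list (take j xs) \<le> sum_list (xs :: nat list)"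
  by (metis sum_list_take_mono nat_le_linear take_all)

definition initial_flag :: "nat list \<Rightarrow> (nat \<Rightarrow> 'a::field) set list" where
  "initial_flag b = coord_flag (\<lambda>j. {..<sum_list (take (Suc j) b)}) (length b)"

lemma initial_flag_in_flags:
  assumes "sum_list b \<le> n"
  shows "initial_flag b \<in> flags n b"
  unfolding initial_flag_def
proof (rule coord_flag_in_flags)
  show "{..<sum_list (take (Suc j) b)} \<subseteq> {..<2*n}" for j
    using sum_list_take_le[of "Suc j" b] assms by auto
  show "{..<sum_list (take (Suc j) b)} \<subseteq> {..<sum_list (take (Suc (Suc j)) b)}" for j
    using sum_list_take_mono[of "Suc j" "Suc (Suc j)" b] by auto
  show "2*n-1-i \<notin> {..<sum_list (take (Suc (length b - 1)) b)}"
    if "i \<in> {..<sum_list (take (Suc (length b - 1)) b)}" for i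
    using that sum_list_take_le[of "Suc (length b - 1)" b] assms by auto
qed simp

(* Z may not contain e_a, the partner of e_(2n-1-a), so its filler coordinates skip a. *)
definition skip :: "nat \<Rightarrow> nat \<Rightarrow> nat" where
  "skip a k = (if k < a then k else Suc k)"

lemma strict_mono_skip: "strict_mono (skip a)"
  by (rule strict_monoI) (auto simp: skip_def)

lemma card_skip_image: "card (skip a ` {1..m}) = m"
  using strict_mono_skip[THEN strict_mono_imp_inj_on] by (simp add: card_image)

lemma skip_image_subset: "skip a ` {1..m} \<subseteq> {1..<m+2} - {a}"
  by (auto simp: skip_def)

definition opposite_flag_idx :: "nat \<Rightarrow> nat \<Rightarrow> nat list \<Rightarrow> nat \<Rightarrow> nat set" where
  "opposite_flag_idx n a c j = (let m = sum_list (take (Suc j) c) in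
     if j = 0 then insert (2*n-1) (skip a ` {1..m-1})
     else {2*n-1, 2*n-1-a} \<union> skip a ` {1..m-2})"

definition opposite_flag :: "nat \<Rightarrow> nat \<Rightarrow> nat list \<Rightarrow> (nat \<Rightarrow> 'a::field) set list" where
  "opposite_flag n a c = coord_flag (opposite_flag_idx n a c) (length c)"

lemma opposite_flag_idx_0_subset:
  "opposite_flag_idx n a c 0 \<subseteq> insert (2*n-1) ({1..<sum_list (take 1 c) + 1} - {a})"
  using skip_image_subset[of a "sum_list (take 1 c) - 1"]
  by (cases "sum_list (take 1 c)") (auto simp: opposite_flag_idx_def)

lemma opposite_flag_idx_subset:
  "0 < j \<Longrightarrow>
    opposite_flag_idx n a c j \<subseteq> {2*n-1, 2*n-1-a} \<union> ({1..<sum_list (take (Suc j) c)} - {a})"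
  using skip_image_subset[of a "sum_list (take (Suc j) c) - 2"]
  by (cases "sum_list (take (Suc j) c) < 2") (auto simp: opposite_flag_idx_def)

lemma card_opposite_flag_idx:
  assumes a: "1 \<le> a" "a < n"
    and c: "c = c0 # c1 # cr" "0 < c0" "0 < c1" and sum_c: "sum_list c \<le> n"
  shows "card (opposite_flag_idx n a c j) = sum_list (take (Suc j) c)"
proof -
  define m where "m = sum_list (take (Suc j) c)"
  have "m \<le> n"
    using sum_list_take_le[of "Suc j" c] sum_c by (simp add: m_def)
  show ?thesis
  proof (cases "j = 0")
    case True
    have "2*n-1 \<notin> {1..<m - 1 + 2}"
      using \<open>m \<le> n\<close> a by auto
    then have "2*n-1 \<notin> skip a ` {1..m - 1}"
      using skip_image_subset by blast
    moreover have "0 < m"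
      using True c by (simp add: m_def)
    ultimately show ?thesis
      unfolding opposite_flag_idx_def Let_def m_def[symmetric]
      using True card_skip_image[of a "m - 1"] by simp
  next
    case False
    have "2 \<le> m"
      using sum_list_take_mono[of 2 "Suc j" c] c False by (simp add: m_def)
    moreover have "2*n-1 \<notin> {1..<m - 2 + 2}" "2*n-1-a \<notin> {1..<m - 2 + 2}"
      using \<open>m \<le> n\<close> a by auto
    then have "2*n-1 \<notin> skip a ` {1..m - 2}" "2*n-1-a \<notin> skip a ` {1..m - 2}"
      using skip_image_subset by blast+
    ultimately show ?thesis
      unfolding opposite_flag_idx_def Let_def m_def[symmetric]
      using False a card_skip_image[of a "m - 2"] by simp
  qed
qed

lemma opposite_flag_in_flags:
  assumes a: "1 \<le> a" "a < n"
    and c: "c = c0 # c1 # cr" "0 < c0" "0 < c1" and sum_c: "sum_list c \<le> n"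
  shows "opposite_flag n a c \<in> flags n c"
  unfolding opposite_flag_def
proof (rule coord_flag_in_flags)
  define m where "m j = sum_list (take (Suc j) c)" for j
  have m_le: "m j \<le> n" for j
    using sum_list_take_le[of "Suc j" c] sum_c by (simp add: m_def)
  have m_mono: "j \<le> k \<Longrightarrow> m j \<le> m k" for j k
    using sum_list_take_mono[of "Suc j" "Suc k" c] by (simp add: m_def)
  have idx_0: "opposite_flag_idx n a c 0 \<subseteq> insert (2*n-1) ({1..<m 0 + 1} - {a})"
    using opposite_flag_idx_0_subset by (simp add: m_def)
  note idx = opposite_flag_idx_subset[of _ n a c, folded m_def]
  fix j
  show "opposite_flag_idx n a c j \<subseteq> {..<2*n}"
    using idx_0 idx[of j] m_le[of j] a by (cases "j = 0") auto
  show "card (opposite_flag_idx n a c j) = sum_list (take (Suc j) c)"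
    by (rule card_opposite_flag_idx[OF a c sum_c])
  show "opposite_flag_idx n a c j \<subseteq> opposite_flag_idx n a c (Suc j)"
  proof -
    have "m 0 - 1 \<le> m (Suc j) - 2" "m j - 2 \<le> m (Suc j) - 2"
      using m_mono[of 1 "Suc j"] m_mono[of j "Suc j"] c by (auto simp: m_def)
    then have "skip a ` {1..m 0 - 1} \<subseteq> skip a ` {1..m (Suc j) - 2}"
      "skip a ` {1..m j - 2} \<subseteq> skip a ` {1..m (Suc j) - 2}"
      by auto
    then show ?thesis
      by (auto simp: opposite_flag_idx_def m_def[symmetric] Let_def)
  qed
  let ?last = "length c - 1"
  have "0 < ?last"
    using c by simp
  then have "opposite_flag_idx n a c ?last \<subseteq> {2*n-1, 2*n-1-a} \<union> ({1..<n} - {a})"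
    using idx[of ?last] m_le[of ?last] by auto
  moreover have "2*n-1-i \<notin> {2*n-1, 2*n-1-a} \<union> ({1..<n} - {a})"
    if "i \<in> {2*n-1, 2*n-1-a} \<union> ({1..<n} - {a})" for i
    using that a by auto
  ultimately show "2*n-1-i \<notin> opposite_flag_idx n a c ?last"
    if "i \<in> opposite_flag_idx n a c ?last" for i
    using that by blast
qed

(* The coordinates n - 1 and n only serve to make l_t isotropic. *)
definition line_vec :: "nat \<Rightarrow> nat \<Rightarrow> 'a::field \<Rightarrow> nat \<Rightarrow> 'a" where
  "line_vec n a t = fscale t (basis_vec 0) + basis_vec (2*n-1) + basis_vec a + basis_vec (2*n-1-a)
     + basis_vec (n-1) + fscale (-(1+t)) (basis_vec n)"

definition line_flag :: "nat \<Rightarrow> nat \<Rightarrow> 'a::field \<Rightarrow> (nat \<Rightarrow> 'a) set list" where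
  "line_flag n a t = [fvs.span {line_vec n a t}]"

lemma bform_line_vec:
  assumes "0 < n" "a < 2*n"
  shows "bform n x (line_vec n a t) =
    t * x (2*n-1) + x 0 + x (2*n-1-a) + x a + x n - (1+t) * x (n-1)"
proof -
  have "2*n-1-(2*n-1-a) = a" "2*n-1-(n-1) = n" "2*n-1-n = n-1"
    using assms by auto
  then show ?thesis
    unfolding line_vec_def bform_add_right bform_fscale_right
    using assms by (simp add: bform_basis_vec_right algebra_simps)
qed

lemma line_vec_in_amb: "0 < n \<Longrightarrow> a < 2*n \<Longrightarrow> line_vec n a t \<in> amb n"
  by (auto simp: amb_def line_vec_def basis_vec_def fscale_def)

lemma line_vec_apply:
  assumes "3 \<le> n" "1 \<le> a" "a \<le> n-2"
  shows "line_vec n a t 0 = t" "line_vec n a t (2*n-1) = 1" "line_vec n a t a = 1"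
    "line_vec n a t (2*n-1-a) = 1" "line_vec n a t (n-1) = 1" "line_vec n a t n = -(1+t)"
  using assms by (auto simp: line_vec_def basis_vec_def fscale_def)

lemma line_vec_isotropic:
  assumes "3 \<le> n" "1 \<le> a" "a \<le> n-2"
  shows "bform n (line_vec n a t) (line_vec n a t) = 0"
proof -
  have "0 < n" "a < 2*n"
    using assms by auto
  then show ?thesis
    unfolding bform_line_vec[OF \<open>0 < n\<close> \<open>a < 2*n\<close>] line_vec_apply[OF assms]
    by (simp add: algebra_simps)
qed

lemma line_flag_in_flags:
  assumes "3 \<le> n" "1 \<le> a" "a \<le> n-2"
  shows "line_flag n a t \<in> flags n [1]"
  unfolding flags_def line_flag_def
proof (intro CollectI conjI allI impI)
  fix j assume "j < length [1::nat]"
  then have j: "j = 0" by simp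
  have "line_vec n a t \<noteq> 0"
    using line_vec_apply(2)[OF assms] by (metis one_neq_zero zero_fun_apply)
  then show "fvs.dim ([fvs.span {line_vec n a t}] ! j) = sum_list (take (Suc j) [1])"
    using j fvs.dim_span_eq_card_independent[of "{line_vec n a t}"] by simp
  have "line_vec n a t \<in> amb n"
    using assms by (simp add: line_vec_in_amb)
  then show "[fvs.span {line_vec n a t}] ! j \<subseteq> amb n"
    using j fvs.span_minimal[of "{line_vec n a t}" "amb n"] subspace_amb by auto
next
  show "isotropic n (last [fvs.span {line_vec n a t}])"
    using line_vec_isotropic[OF assms]
    by (auto simp: isotropic_def fvs.span_singleton bform_fscale_left bform_fscale_right)
qed simp_all

lemma line_vec_pairing_products:
  fixes u v w z :: "nat \<Rightarrow> 'a::field"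
  assumes n: "3 \<le> n" and a: "1 \<le> a" "a < d" "d < n"
    and u: "u \<in> coord_span {..<a}" and v: "v \<in> coord_span {..<d}"
    and w: "w \<in> coord_span (insert (2*n-1) ({1..<n-1} - {a}))"
    and z: "z \<in> coord_span ({2*n-1, 2*n-1-a} \<union> ({1..<n-1} - {a}))"
    and uw: "bform n u w = 1" and vw: "bform n v w = 0"
    and uz: "bform n u z = 0" and vz: "bform n v z = 1"
  shows "bform n u (line_vec n a t) * bform n w (line_vec n a t) = t"
    and "bform n v (line_vec n a t) * bform n z (line_vec n a t) = 1"
proof -
  have u0: "u i = 0" if "a \<le> i" for i
    using coord_span_vanishes[OF u] that by simp
  have v0: "v i = 0" if "d \<le> i" for i
    using coord_span_vanishes[OF v] that by simp
  have w0: "w i = 0" if "i \<notin> insert (2*n-1) ({1..<n-1} - {a})" for i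
    using coord_span_vanishes[OF w] that by simp
  have z0: "z i = 0" if "i \<notin> {2*n-1, 2*n-1-a} \<union> ({1..<n-1} - {a})" for i
    using coord_span_vanishes[OF z] that by simp
  have "{i. i \<in> {..<a} \<and> i < 2*n \<and> 2*n-1-i \<in> insert (2*n-1) ({1..<n-1} - {a})} = {0}"
    "{i. i \<in> {..<d} \<and> i < 2*n \<and> 2*n-1-i \<in> insert (2*n-1) ({1..<n-1} - {a})} = {0}"
    "{i. i \<in> {..<a} \<and> i < 2*n \<and> 2*n-1-i \<in> {2*n-1, 2*n-1-a} \<union> ({1..<n-1} - {a})} = {0}"
    "{i. i \<in> {..<d} \<and> i < 2*n \<and> 2*n-1-i \<in> {2*n-1, 2*n-1-a} \<union> ({1..<n-1} - {a})} = {0, a}"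
    using n a by auto
  then have "u 0 * w (2*n-1) = 1" "v 0 * w (2*n-1) = 0" "u 0 * z (2*n-1) = 0"
    "v 0 * z (2*n-1) + v a * z (2*n-1-a) = 1"
    using uw vw uz vz a n
    by (simp_all add: bform_coord_span[OF u w] bform_coord_span[OF v w]
        bform_coord_span[OF u z] bform_coord_span[OF v z])
  then have products: "u 0 * w (2*n-1) = 1" "v a * z (2*n-1-a) = 1" "v 0 = 0" "z (2*n-1) = 0"
    by auto
  have "0 < n" "a < 2*n"
    using n a by auto
  note pairing = bform_line_vec[OF this]
  have "bform n u (line_vec n a t) = u 0"
    using n a by (simp add: pairing u0)
  moreover have "bform n w (line_vec n a t) = t * w (2*n-1)"
  proof -
    have "w (2*n-1-a) = 0" "w n = 0"
      by (rule w0; use n a in auto)+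
    then show ?thesis
      using n a by (simp add: pairing w0)
  qed
  moreover have "bform n v (line_vec n a t) = v a"
    using n a products(3) by (simp add: pairing v0)
  moreover have "bform n z (line_vec n a t) = z (2*n-1-a)"
  proof -
    have "z 0 = 0" "z a = 0" "z n = 0" "z (n-1) = 0"
      by (rule z0; use n a in auto)+
    then show ?thesis
      using n a products(4) by (simp add: pairing)
  qed
  ultimately show "bform n u (line_vec n a t) * bform n w (line_vec n a t) = t"
    and "bform n v (line_vec n a t) * bform n z (line_vec n a t) = 1"
    using products by (simp_all add: algebra_simps)
qed

lemma isometry_basis_vec:
  assumes "\<And>x y. x \<in> amb n \<Longrightarrow> y \<in> amb n \<Longrightarrow> bform n (g x) (g y) = bform n x y"
    and "i < 2*n" "j < 2*n"
  shows "bform n (g (basis_vec i)) (g (basis_vec j)) = basis_vec i (2*n-1-j)"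
  using assms basis_vec_in_amb bform_basis_vec_right by metis

lemma line_param_invariant:
  fixes g :: "(nat \<Rightarrow> 'a::field) \<Rightarrow> nat \<Rightarrow> 'a"
  assumes n: "3 \<le> n" and a: "1 \<le> a" "a < d" "d < n"
    and Z1: "2*n-1 \<in> Z\<^sub>1" "Z\<^sub>1 \<subseteq> insert (2*n-1) ({1..<n-1} - {a})"
    and Z2: "2*n-1-a \<in> Z\<^sub>2" "Z\<^sub>2 \<subseteq> {2*n-1, 2*n-1-a} \<union> ({1..<n-1} - {a})"
    and isometry: "\<And>x y. x \<in> amb n \<Longrightarrow> y \<in> amb n \<Longrightarrow> bform n (g x) (g y) = bform n x y"
    and stable: "\<And>S. S \<in> {{..<a}, {..<d}, Z\<^sub>1, Z\<^sub>2} \<Longrightarrow> g ` coord_span S \<subseteq> coord_span S"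
    and line: "g (line_vec n a s) \<in> fvs.span {line_vec n a t}"
  shows "s = t"
proof -
  define u v w z where "u = g (basis_vec 0)" and "v = g (basis_vec a)"
    and "w = g (basis_vec (2*n-1))" and "z = g (basis_vec (2*n-1-a))"
  define l where "l = line_vec n a t"
  have stable_basis: "g (basis_vec k) \<in> coord_span S"
    if "S \<in> {{..<a}, {..<d}, Z\<^sub>1, Z\<^sub>2}" "k \<in> S" for S k
    using stable[OF that(1)] basis_vec_in_coord_span[OF that(2)] by auto
  have "u \<in> coord_span {..<a}" "v \<in> coord_span {..<d}"
    using stable_basis a by (auto simp: u_def v_def)
  moreover have "w \<in> coord_span (insert (2*n-1) ({1..<n-1} - {a}))"
    using stable_basis[of "Z\<^sub>1" "2*n-1"] Z1 coord_span_mono unfolding w_def by blast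
  moreover have "z \<in> coord_span ({2*n-1, 2*n-1-a} \<union> ({1..<n-1} - {a}))"
    using stable_basis[of "Z\<^sub>2" "2*n-1-a"] Z2 coord_span_mono unfolding z_def by blast
  moreover have "bform n u w = 1" "bform n v w = 0" "bform n u z = 0" "bform n v z = 1"
    using n a isometry_basis_vec[OF isometry]
    by (simp_all add: u_def v_def w_def z_def basis_vec_def)
  ultimately have products: "bform n u l * bform n w l = t" "bform n v l * bform n z l = 1"
    using line_vec_pairing_products[OF n a] by (simp_all add: l_def)
  obtain c where c: "g (line_vec n a s) = fscale c l"
    using line unfolding fvs.span_singleton l_def by auto
  have "line_vec n a s \<in> amb n"
    using n a by (simp add: line_vec_in_amb)
  then have pair_image: "bform n (line_vec n a s) (basis_vec k) = c * bform n x l"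
    if "k < 2*n" "x = g (basis_vec k)" for k x
    using that isometry[of "line_vec n a s" "basis_vec k"] basis_vec_in_amb
    by (metis bform_fscale_left bform_sym c)
  have "s = bform n (line_vec n a s) (basis_vec 0) * bform n (line_vec n a s) (basis_vec (2*n-1))"
    using n a line_vec_apply[of n a s] by (simp add: bform_basis_vec_right)
  also have "\<dots> = c * c * t"
    using n products(1) by (simp add: pair_image u_def w_def algebra_simps)
  also have "c * c = 1"
  proof -
    have "1 = bform n (line_vec n a s) (basis_vec a) * bform n (line_vec n a s) (basis_vec (2*n-1-a))"
      using n a line_vec_apply[of n a s] by (simp add: bform_basis_vec_right)
    also have "\<dots> = c * c"
      using n a products(2) by (simp add: pair_image v_def z_def algebra_simps)
    finally show ?thesis ..
  qed
  finally show ?thesis by simp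
qed

definition triple_orbit :: "nat \<Rightarrow> (nat \<Rightarrow> 'a::field) set list \<Rightarrow> (nat \<Rightarrow> 'a) set list
    \<Rightarrow> (nat \<Rightarrow> 'a) set list
    \<Rightarrow> ((nat \<Rightarrow> 'a) set list \<times> (nat \<Rightarrow> 'a) set list \<times> (nat \<Rightarrow> 'a) set list) set" where
  "triple_orbit n x y z = {(act_flag g x, act_flag g y, act_flag g z) | g. g \<in> orth_group n}"

lemma triple_orbit_in_triple_orbits:
  "x \<in> flags n a \<Longrightarrow> y \<in> flags n b \<Longrightarrow> z \<in> flags n c
    \<Longrightarrow> triple_orbit n x y z \<in> triple_orbits n a b c"
  unfolding triple_orbits_def triple_orbit_def by blast

lemma triple_orbit_eqD:
  assumes "triple_orbit n x y z = triple_orbit n x' y' z'"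
  obtains g where "g \<in> orth_group n"
    "act_flag g x = x'" "act_flag g y = y'" "act_flag g z = z'"
proof -
  have "id \<in> orth_group n"
    unfolding orth_group_def by (simp add: bij_betw_id)
  moreover have "(x', y', z') = (act_flag id x', act_flag id y', act_flag id z')"
    by (simp add: act_flag_def)
  ultimately have "(x', y', z') \<in> triple_orbit n x' y' z'"
    unfolding triple_orbit_def by blast
  then have "(x', y', z') \<in> triple_orbit n x y z"
    using assms by simp
  then show ?thesis
    using that unfolding triple_orbit_def by auto
qed

lemma act_flag_nth: "act_flag g X = Y \<Longrightarrow> j < length X \<Longrightarrow> g ` (X ! j) = Y ! j"
  unfolding act_flag_def by auto

lemma line_flag_orbits_distinct:
  fixes g :: "(nat \<Rightarrow> 'a::field) \<Rightarrow> nat \<Rightarrow> 'a"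
  assumes n: "3 \<le> n"
    and b: "b = a # b1 # br" "0 < a" "0 < b1" "a + b1 < n"
    and c: "c = c0 # c1 # cr" "0 < c1" "c0 + c1 < n"
    and g: "g \<in> orth_group n"
    and g_line: "act_flag g (line_flag n a s) = line_flag n a t"
    and g_initial: "act_flag g (initial_flag b) = initial_flag b"
    and g_opposite: "act_flag g (opposite_flag n a c) = opposite_flag n a c"
  shows "s = t"
proof (rule line_param_invariant[where d = "a + b1"
      and Z\<^sub>1 = "opposite_flag_idx n a c 0" and Z\<^sub>2 = "opposite_flag_idx n a c 1"])
  show "2*n-1 \<in> opposite_flag_idx n a c 0" "2*n-1-a \<in> opposite_flag_idx n a c 1"
    by (simp_all add: opposite_flag_idx_def)
  show "opposite_flag_idx n a c 0 \<subseteq> insert (2*n-1) ({1..<n-1} - {a})"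
  proof -
    have "{1..<c0 + 1} \<subseteq> {1..<n-1}"
      using c by auto
    then show ?thesis
      using opposite_flag_idx_0_subset[of n a c] c by auto
  qed
  show "opposite_flag_idx n a c 1 \<subseteq> {2*n-1, 2*n-1-a} \<union> ({1..<n-1} - {a})"
  proof -
    have "{1..<c0 + c1} \<subseteq> {1..<n-1}"
      using c by auto
    then show ?thesis
      using opposite_flag_idx_subset[of 1 n a c] c by auto
  qed
  show "bform n (g x) (g y) = bform n x y" if "x \<in> amb n" "y \<in> amb n" for x y
    using g that unfolding orth_group_def by blast
  have "g ` fvs.span {line_vec n a s} = fvs.span {line_vec n a t}"
    using act_flag_nth[OF g_line, of 0] by (simp add: line_flag_def)
  then show "g (line_vec n a s) \<in> fvs.span {line_vec n a t}"
    using fvs.span_base by blast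
  have "(initial_flag b :: (nat \<Rightarrow> 'a) set list) ! 0 = coord_span {..<a}"
    "(initial_flag b :: (nat \<Rightarrow> 'a) set list) ! 1 = coord_span {..<a + b1}"
    and len: "0 < length (initial_flag b :: (nat \<Rightarrow> 'a) set list)"
      "1 < length (initial_flag b :: (nat \<Rightarrow> 'a) set list)"
    using b by (simp_all add: initial_flag_def coord_flag_nth)
  then have "g ` coord_span {..<a} = coord_span {..<a}"
    "g ` coord_span {..<a + b1} = coord_span {..<a + b1}"
    using act_flag_nth[OF g_initial len(1)] act_flag_nth[OF g_initial len(2)] by simp_all
  moreover have opposite_stable:
    "g ` coord_span (opposite_flag_idx n a c j) = coord_span (opposite_flag_idx n a c j)"
    if "j \<le> 1" for j
  proof -
    have "j < length c"
      using c that by simp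
    then show ?thesis
      using act_flag_nth[OF g_opposite, of j] by (simp add: opposite_flag_def coord_flag_nth)
  qed
  ultimately show "g ` coord_span S \<subseteq> coord_span S"
    if "S \<in> {{..<a}, {..<a + b1}, opposite_flag_idx n a c 0, opposite_flag_idx n a c 1}" for S
    using that opposite_stable[of 0] opposite_stable[of 1] by (elim insertE emptyE) simp_all
qed (use n b in auto)

lemma two_parts_sum_less:
  fixes xs :: "nat list"
  assumes "xs = x # y # zs" "\<forall>v\<in>set xs. 0 < v" "sum_list xs \<le> n" "xs \<noteq> [x, n - x]"
  shows "x + y < n"
  using assms by (cases zs) auto

lemma infinitely_many_line_flag_orbits:
  assumes "infinite (UNIV :: 'a::field set)" and n: "3 \<le> n"
    and b: "b = a # b1 # br" "0 < a" "0 < b1" "a + b1 < n" "sum_list b \<le> n"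
    and c: "c = c0 # c1 # cr" "0 < c0" "0 < c1" "c0 + c1 < n" "sum_list c \<le> n"
  shows "infinite (triple_orbits n [1] b c :: ((nat \<Rightarrow> 'a) set list \<times> _ \<times> _) set set)"
proof -
  define orbit :: "'a \<Rightarrow> _" where
    "orbit t = triple_orbit n (line_flag n a t) (initial_flag b) (opposite_flag n a c)" for t
  have "orbit t \<in> triple_orbits n [1] b c" for t
    unfolding orbit_def
    by (intro triple_orbit_in_triple_orbits line_flag_in_flags initial_flag_in_flags
        opposite_flag_in_flags[OF _ _ c(1-3)]) (use n b c in auto)
  moreover have "inj orbit"
  proof (rule injI)
    fix s t assume "orbit s = orbit t"
    then obtain g :: "(nat \<Rightarrow> 'a) \<Rightarrow> nat \<Rightarrow> 'a" where "g \<in> orth_group n"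
      "act_flag g (line_flag n a s) = line_flag n a t"
      "act_flag g (initial_flag b) = initial_flag b"
      "act_flag g (opposite_flag n a c) = opposite_flag n a c"
      unfolding orbit_def by (rule triple_orbit_eqD)
    then show "s = t"
      by (rule line_flag_orbits_distinct[OF n b(1-4) c(1,3,4)])
  qed
  ultimately show ?thesis
    using assms(1) by (meson finite_imageD finite_subset image_subsetI)
qed

theorem proposition1p4:
  fixes n :: nat and b c :: "nat list"
  assumes "infinite (UNIV :: 'a::field set)"
    and "(2::'a) \<noteq> 0"
    and "n \<ge> 3"
    and "\<forall>x\<in>set b. x > 0" and "\<forall>x\<in>set c. x > 0"
    and "sum_list b \<le> n" and "sum_list c \<le> n"
    and "2 \<le> length b" and "length b \<le> length c"
    and "finite (triple_orbits n [1] b c :: ((nat \<Rightarrow> 'a) set list \<times> _ \<times> _) set set)"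
  shows "\<exists>k. b = [k, n - k] \<or> c = [k, n - k]"
proof (rule ccontr)
  assume no_two_parts: "\<nexists>k. b = [k, n - k] \<or> c = [k, n - k]"
  obtain a b1 br where b: "b = a # b1 # br"
    using \<open>2 \<le> length b\<close> by (auto simp: numeral_2_eq_2 Suc_le_length_iff)
  obtain c0 c1 cr where c: "c = c0 # c1 # cr"
    using \<open>2 \<le> length b\<close> \<open>length b \<le> length c\<close>
    by (auto simp: numeral_2_eq_2 Suc_le_length_iff)
  have "a + b1 < n"
    by (rule two_parts_sum_less[OF b assms(4,6)]) (use no_two_parts in blast)
  moreover have "c0 + c1 < n"
    by (rule two_parts_sum_less[OF c assms(5,7)]) (use no_two_parts in blast)
  ultimately have "infinite (triple_orbits n [1] b c :: ((nat \<Rightarrow> 'a) set list \<times> _ \<times> _) set set)"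
    using infinitely_many_line_flag_orbits[OF assms(1,3) b _ _ _ assms(6) c _ _ _ assms(7)]
      assms(4,5) b c by simp
  then show False
    using assms(10) by contradiction
qed

end
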